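(* For all $\sigma\in\Sigma_k$, $\tau\in\Sigma_l$ and $\epsilon\in Sh(k,l)$, the element $\epsilon^{-1}.(\mathbb T^\sigma\mathbb T^\tau)$ lies in $\mathbf H_{ho}$ and $$\epsilon^{-1}.(\mathbb T^\sigma\,\mathbb T^\tau)=\sum_{\zeta\in Sh(k,l)}\mathbb T^{\zeta^{-1}\circ(\sigma\otimes\tau)\circ\epsilon}.$$
   Context: A rooted forest is a finite graph each of whose components is a tree with a distinguished root; edges are oriented towards the roots, and $v\twoheadrightarrow w$ means there is an oriented path from $v$ to $w\ne v$. An ordered forest with $n$ vertices is a rooted forest with a total order on the vertices, identifying them with $\{1,\dots,n\}$; it is heap-ordered if $i\twoheadrightarrow j\Rightarrow i>j$. $\mathbf H_o$ (resp. $\mathbf H_{ho}$) is the vector space with basis ordered (resp. heap-ordered) forests, with product $\mathbb F\mathbb G$ = disjoint union where the vertices of $\mathbb G$ are shifted by the number of vertices of $\mathbb F$, and coproduct by admissible cuts $\Delta(\mathbb F)=\sum_{\vec v}\mathrm{Roo}_{\vec v}\mathbb F\otimes\mathrm{Lea}_{\vec v}\mathbb F$ ($\vec v$ a possibly empty set of pairwise $\twoheadrightarrow$-incomparable vertices; $\mathrm{Lea}_{\vec v}\mathbb F$ the subforest on $\vec v$ and all $w$ with $w\twoheadrightarrow v$ for some $v\in\vec v$; $\mathrm{Roo}_{\vec v}\mathbb F$ the subforest on the rest; orders restricted). For $\pi\in\Sigma_n$, $\pi.\mathbb F$ is the ordered forest with the same underlying rooted forest in which vertex $i$ is relabeled $\pi(i)$,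 extended linearly to the degree-$n$ part of $\mathbf H_o$. $(\sigma\circ\tau)(i)=\sigma(\tau(i))$; $(\sigma\otimes\tau)(i)=\sigma(i)$ for $i\le k$, $k+\tau(i-k)$ for $i>k$; $Sh(k,l)=\{\zeta\in\Sigma_{k+l}:\zeta^{-1}(1)<\dots<\zeta^{-1}(k),\ \zeta^{-1}(k+1)<\dots<\zeta^{-1}(k+l)\}$. $\mathbf{FQSym}$ has basis $\bigsqcup_n\Sigma_n$, product $\sigma\cdot\tau=\sum_{\epsilon\in Sh(k,l)}(\sigma\otimes\tau)\circ\epsilon$, coproduct $\Delta(\sigma)=\sum_k\sigma_1^{(k)}\otimes\sigma_2^{(k)}$ (standardizations of prefix and suffix of the word of $\sigma$). $S_{\mathbb F}=\{\sigma\in\Sigma_n:i\twoheadrightarrow j\Rightarrow\sigma^{-1}(i)>\sigma^{-1}(j)\}$, $\Theta(\mathbb F)=\sum_{\sigma\in S_{\mathbb F}}\sigma$; the restriction of $\Theta$ to $\mathbf H_{ho}$ is a Hopf algebra isomorphism onto $\mathbf{FQSym}$. For $\sigma\in\Sigma_n$, $\mathbb T^\sigma$ is the unique element of $\mathbf H_{ho}$ with $\Theta(\mathbb T^\sigma)=\sigma^{-1}$. *)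

theory Defs
  imports "HOL-Library.Poly_Mapping" "HOL-Combinatorics.Permutations"
begin

text \<open>An ordered forest with n vertices: vertices are 1..n, given by the pair
  (n, parent function). The parent function is None on roots and outside 1..n.
  Edges are oriented towards the roots.\<close>
type_synonym oforest = "nat \<times> (nat \<Rightarrow> nat option)"

definition fedges :: "oforest \<Rightarrow> (nat \<times> nat) set" where
  "fedges F = {(i, j). snd F i = Some j}"

definition reach :: "oforest \<Rightarrow> nat \<Rightarrow> nat \<Rightarrow> bool" where
  "reach F v w \<longleftrightarrow> (v, w) \<in> (fedges F)\<^sup>+ \<and> v \<noteq> w"

definition ordered_forest :: "oforest \<Rightarrow> bool" where
  "ordered_forest F \<longleftrightarrow>
     (\<forall>i j. snd F i = Some j \<longrightarrow> i \<in> {1..fst F} \<and> j \<in> {1..fst F}) \<and>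
     (\<forall>i. (i, i) \<notin> (fedges F)\<^sup>+)"

definition heap_ordered :: "oforest \<Rightarrow> bool" where
  "heap_ordered F \<longleftrightarrow> ordered_forest F \<and> (\<forall>i j. reach F i j \<longrightarrow> i > j)"

definition H_o :: "(oforest \<Rightarrow>\<^sub>0 'k::field) set" where
  "H_o = {x. \<forall>F \<in> Poly_Mapping.keys x. ordered_forest F}"

definition H_ho :: "(oforest \<Rightarrow>\<^sub>0 'k::field) set" where
  "H_ho = {x. \<forall>F \<in> Poly_Mapping.keys x. heap_ordered F}"

definition fmul :: "oforest \<Rightarrow> oforest \<Rightarrow> oforest" where
  "fmul F G = (fst F + fst G,
     \<lambda>i. if i \<le> fst F then snd F i else map_option (\<lambda>j. j + fst F) (snd G (i - fst F)))"

definition vmul :: "(oforest \<Rightarrow>\<^sub>0 'k::field) \<Rightarrow> (oforest \<Rightarrow>\<^sub>0 'k) \<Rightarrow> (oforest \<Rightarrow>\<^sub>0 'k)" where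
  "vmul x y = (\<Sum>F\<in>Poly_Mapping.keys x. \<Sum>G\<in>Poly_Mapping.keys y. Poly_Mapping.single (fmul F G) (Poly_Mapping.lookup x F * Poly_Mapping.lookup y G))"

text \<open>Action of a permutation pi (of {1..n}) on an ordered forest: vertex i is relabeled pi(i).\<close>
definition fact :: "(nat \<Rightarrow> nat) \<Rightarrow> oforest \<Rightarrow> oforest" where
  "fact pi F = (fst F, \<lambda>j. map_option pi (snd F (inv pi j)))"

definition vact :: "(nat \<Rightarrow> nat) \<Rightarrow> (oforest \<Rightarrow>\<^sub>0 'k::field) \<Rightarrow> (oforest \<Rightarrow>\<^sub>0 'k)" where
  "vact pi x = (\<Sum>F\<in>Poly_Mapping.keys x. Poly_Mapping.single (fact pi F) (Poly_Mapping.lookup x F))"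

text \<open>FQSym: basis the disjoint union of the Sigma_n, a permutation of {1..n} encoded as (n, sigma).\<close>
type_synonym fqsym_basis = "nat \<times> (nat \<Rightarrow> nat)"

definition Sym :: "nat \<Rightarrow> (nat \<Rightarrow> nat) set" where
  "Sym n = {s. s permutes {1..n}}"

definition S_F :: "oforest \<Rightarrow> (nat \<Rightarrow> nat) set" where
  "S_F F = {s. s \<in> Sym (fst F) \<and> (\<forall>i j. reach F i j \<longrightarrow> inv s i > inv s j)}"

definition Theta :: "(oforest \<Rightarrow>\<^sub>0 'k::field) \<Rightarrow> (fqsym_basis \<Rightarrow>\<^sub>0 'k)" where
  "Theta x = (\<Sum>F\<in>Poly_Mapping.keys x. \<Sum>s\<in>S_F F. Poly_Mapping.single (fst F, s) (Poly_Mapping.lookup x F))"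

definition Tsig :: "nat \<Rightarrow> (nat \<Rightarrow> nat) \<Rightarrow> (oforest \<Rightarrow>\<^sub>0 'k::field)" where
  "Tsig n s = (THE x. x \<in> H_ho \<and> Theta x = Poly_Mapping.single (n, inv s) 1)"

definition ptensor :: "nat \<Rightarrow> (nat \<Rightarrow> nat) \<Rightarrow> (nat \<Rightarrow> nat) \<Rightarrow> nat \<Rightarrow> nat" where
  "ptensor k s t i = (if i \<le> k then s i else k + t (i - k))"

definition Sh :: "nat \<Rightarrow> nat \<Rightarrow> (nat \<Rightarrow> nat) set" where
  "Sh k l = {z. z \<in> Sym (k + l) \<and>
     (\<forall>i j. 1 \<le> i \<and> i < j \<and> j \<le> k \<longrightarrow> inv z i < inv z j) \<and>
     (\<forall>i j. k + 1 \<le> i \<and> i < j \<and> j \<le> k + l \<longrightarrow> inv z i < inv z j)}"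

end

theory Submission
  imports Defs
begin

(* Idea: an element x of H_ho supported on forests with n vertices is determined by
   Theta(x), which we read through its coordinates theta_coord n x w (the coefficient
   of w^-1): the sum of the coefficients of the forests of which w is a decreasing
   labelling ("linear extension").  This gives a recursion for theta_coord, from
      which it is injective and has a dual basis; hence Theta is injective on H_ho,
      T^sigma exists, and its coordinates are the indicator of sigma (Tsig_dual_basis).
   2. Standardization of permutations, shuffles and sigma (x) tau:
      (sigma (x) tau) o u^-1 is a shuffle iff sigma and tau are the standardizations of
      the two blocks of u (ptensor_comp_inv_Sh_iff).
   3. w is a linear extension of eps^-1.(F G) iff the two blocks of w o eps^-1
      standardize to linear extensions of F and G; so coordinates of eps^-1.(x y) are
      products of coordinates (theta_coord_shuffled_product).
   The theorem follows by comparing coordinates: at w, the left side gives the product of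
   the indicators of sigma and tau at the standardized blocks of w o eps^-1, while on the
   right only zeta = (sigma (x) tau) o (w o eps^-1)^-1 can contribute, and it lies in
   Sh k l under exactly the same condition. *)

lemma Sym_range: "w \<in> Sym n \<Longrightarrow> 1 \<le> v \<Longrightarrow> v \<le> n \<Longrightarrow> 1 \<le> w v \<and> w v \<le> n"
  unfolding Sym_def using permutes_in_image[of w "{1..n}" v] by auto

lemma Sym_out: "w \<in> Sym n \<Longrightarrow> \<not> (1 \<le> v \<and> v \<le> n) \<Longrightarrow> w v = v"
  unfolding Sym_def using permutes_not_in[of w "{1..n}" v] by auto

lemma Sym_pos: "w \<in> Sym n \<Longrightarrow> 1 \<le> v \<Longrightarrow> 1 \<le> w v"
  using Sym_range[of w n v] Sym_out[of w n v] by (cases "v \<le> n") auto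

lemma Sym_inj: "w \<in> Sym n \<Longrightarrow> w a = w b \<Longrightarrow> a = b"
  unfolding Sym_def using permutes_inj[of w "{1..n}"] by (auto dest: injD)

lemma Sym_bij: "w \<in> Sym n \<Longrightarrow> bij w"
  unfolding Sym_def by (simp add: permutes_bij)

lemma Sym_inv: "w \<in> Sym n \<Longrightarrow> inv w \<in> Sym n"
  unfolding Sym_def by (simp add: permutes_inv)

lemma Sym_inv_inv: "w \<in> Sym n \<Longrightarrow> inv (inv w) = w"
  unfolding Sym_def by (simp add: permutes_inv_inv)

lemma Sym_inverses: "w \<in> Sym n \<Longrightarrow> w (inv w x) = x" "w \<in> Sym n \<Longrightarrow> inv w (w x) = x"
  unfolding Sym_def by (simp_all add: permutes_inverses)

lemma Sym_inv_eq_iff: "v \<in> Sym n \<Longrightarrow> w \<in> Sym n \<Longrightarrow> inv v = inv w \<longleftrightarrow> v = w"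
  by (metis Sym_inv_inv)

lemma Sym_inj_on: "u \<in> Sym n \<Longrightarrow> inj_on u A"
  by (meson inj_onI Sym_inj)

lemma Sym_shift_inj_on: "u \<in> Sym n \<Longrightarrow> inj_on (\<lambda>i. u (k + i)) A"
  by (rule inj_onI) (use Sym_inj in force)

lemma Sym_comp: "v \<in> Sym n \<Longrightarrow> w \<in> Sym n \<Longrightarrow> v \<circ> w \<in> Sym n"
  unfolding Sym_def by (simp add: permutes_compose)

lemma Sym_0: "Sym 0 = {id}"
  unfolding Sym_def by (auto simp: permutes_empty)

lemma finite_Sym: "finite (Sym n)"
  unfolding Sym_def using finite_permutations[of "{1..n}"] by simp

lemma sum_values_below:
  fixes f :: "nat \<Rightarrow> 'a::comm_monoid_add"
  assumes w: "w \<in> Sym n" and j: "j \<le> Suc n"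
  shows "(\<Sum>m\<in>{1..n}. if w m < j then f m else 0) = (\<Sum>i\<in>{1..<j}. f (inv w i))"
proof -
  let ?g = "\<lambda>i. if i < j then f (inv w i) else 0"
  have "bij_betw w {1..n} {1..n}" using w unfolding Sym_def by (simp add: permutes_imp_bij)
  then have "(\<Sum>m\<in>{1..n}. ?g (w m)) = (\<Sum>i\<in>{1..n}. ?g i)" by (rule sum.reindex_bij_betw)
  also have "\<dots> = (\<Sum>i\<in>{1..<j}. ?g i)"
    by (rule sum.mono_neutral_right) (use j in auto)
  also have "(\<Sum>m\<in>{1..n}. ?g (w m)) = (\<Sum>m\<in>{1..n}. if w m < j then f m else 0)"
    by (simp only: Sym_inverses(2)[OF w])
  finally show ?thesis by simp
qed

text \<open>A permutation of \<open>{1..Suc n}\<close> is determined by the value \<open>j\<close> it gives to the new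
  point \<open>Suc n\<close> together with the relative order of the values on \<open>{1..n}\<close>, a
  permutation \<open>w\<close> of \<open>{1..n}\<close>: the permutation \<open>insert_top n w j\<close> below.
  This bijection \<open>Sym n \<times> {1..Suc n} \<cong> Sym (Suc n)\<close> drives all inductions on \<open>n\<close>.\<close>

definition insert_top :: "nat \<Rightarrow> (nat \<Rightarrow> nat) \<Rightarrow> nat \<Rightarrow> nat \<Rightarrow> nat" where
  "insert_top n w j v =
     (if v = Suc n then j
      else if 1 \<le> v \<and> v \<le> n then (if w v < j then w v else Suc (w v)) else v)"

definition delete_top :: "nat \<Rightarrow> (nat \<Rightarrow> nat) \<Rightarrow> nat \<Rightarrow> nat" where
  "delete_top n w v = (if 1 \<le> v \<and> v \<le> n then (if w v > w (Suc n) then w v - 1 else w v) else v)"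

lemma insert_top_less_iff:
  assumes "w \<in> Sym n" "1 \<le> a" "a \<le> n" "1 \<le> b" "b \<le> n"
  shows "insert_top n w j a < insert_top n w j b \<longleftrightarrow> w a < w b"
  using assms by (auto simp: insert_top_def)

lemma insert_top_Sym:
  assumes w: "w \<in> Sym n" and j: "1 \<le> j" "j \<le> Suc n"
  shows "insert_top n w j \<in> Sym (Suc n)"
  unfolding Sym_def mem_Collect_eq
proof (rule inj_imp_permutes)
  show "inj_on (insert_top n w j) {1..Suc n}"
  proof (rule inj_onI)
    fix a b assume a: "a \<in> {1..Suc n}" and b: "b \<in> {1..Suc n}"
      and eq: "insert_top n w j a = insert_top n w j b"
    have r: "1 \<le> w v \<and> w v \<le> n" if "v \<in> {1..Suc n}" "v \<noteq> Suc n" for v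
      using that Sym_range[OF w, of v] by auto
    show "a = b"
    proof (cases "a = Suc n \<or> b = Suc n")
      case True
      then show ?thesis using eq a b r by (auto simp: insert_top_def split: if_splits)
    next
      case False
      then have "w a = w b" using eq a b r by (auto simp: insert_top_def split: if_splits)
      then show ?thesis by (rule Sym_inj[OF w])
    qed
  qed
  show "insert_top n w j x \<in> {1..Suc n}" if "x \<in> {1..Suc n}" for x
    using that j Sym_range[OF w] by (auto simp: insert_top_def)
qed (auto simp: insert_top_def)

lemma delete_top_Sym:
  assumes w: "w \<in> Sym (Suc n)"
  shows "delete_top n w \<in> Sym n"
  unfolding Sym_def mem_Collect_eq
proof (rule inj_imp_permutes)
  have ne: "w v \<noteq> w (Suc n)" if "v \<le> n" for v
    using that Sym_inj[OF w] by force
  show "inj_on (delete_top n w) {1..n}"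
  proof (rule inj_onI)
    fix a b assume "a \<in> {1..n}" "b \<in> {1..n}" "delete_top n w a = delete_top n w b"
    then have "w a = w b" using ne[of a] ne[of b] by (auto simp: delete_top_def split: if_splits)
    then show "a = b" by (rule Sym_inj[OF w])
  qed
  show "delete_top n w x \<in> {1..n}" if x: "x \<in> {1..n}" for x
    using x ne[of x] Sym_range[OF w, of x] Sym_range[OF w, of "Suc n"]
    by (auto simp: delete_top_def)
qed (auto simp: delete_top_def)

lemma insert_delete_top:
  assumes w: "w \<in> Sym (Suc n)"
  shows "insert_top n (delete_top n w) (w (Suc n)) = w"
proof
  fix v
  have ne: "w v \<noteq> w (Suc n)" if "v \<le> n" using that Sym_inj[OF w] by force
  show "insert_top n (delete_top n w) (w (Suc n)) v = w v"
    using ne Sym_pos[OF w, of v] Sym_out[OF w, of v]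
    by (auto simp: insert_top_def delete_top_def)
qed

lemma Sym_Suc: "Sym (Suc n) = (\<lambda>(w, j). insert_top n w j) ` (Sym n \<times> {1..Suc n})"
proof (intro set_eqI iffI)
  fix w assume w: "w \<in> Sym (Suc n)"
  have "w (Suc n) \<in> {1..Suc n}" using Sym_range[OF w, of "Suc n"] by auto
  then show "w \<in> (\<lambda>(w, j). insert_top n w j) ` (Sym n \<times> {1..Suc n})"
    using insert_delete_top[OF w] delete_top_Sym[OF w]
    by (auto intro!: image_eqI[where x = "(delete_top n w, w (Suc n))"])
qed (auto intro: insert_top_Sym)

lemma insert_top_inj: "inj_on (\<lambda>(w, j). insert_top n w j) (Sym n \<times> {1..Suc n})"
proof (rule inj_onI, clarify)
  fix w j w' j' assume w: "w \<in> Sym n" and w': "w' \<in> Sym n"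
    and eq: "insert_top n w j = insert_top n w' j'"
  have "j = j'" using fun_cong[OF eq, of "Suc n"] by (simp add: insert_top_def)
  moreover have "w v = w' v" for v
  proof (cases "1 \<le> v \<and> v \<le> n")
    case True
    then show ?thesis using fun_cong[OF eq, of v] \<open>j = j'\<close>
      by (auto simp: insert_top_def split: if_splits)
  qed (simp add: Sym_out[OF w] Sym_out[OF w'])
  ultimately show "w = w' \<and> j = j'" by auto
qed

definition HO :: "nat \<Rightarrow> oforest set" where
  "HO n = {F. fst F = n \<and> (\<forall>i j. snd F i = Some j \<longrightarrow> 1 \<le> j \<and> j < i \<and> i \<le> n)}"

lemma HO_I: "fst F = n \<Longrightarrow> (\<And>i j. snd F i = Some j \<Longrightarrow> 1 \<le> j \<and> j < i \<and> i \<le> n) \<Longrightarrow> F \<in> HO n"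
  unfolding HO_def by blast

lemma HO_D: "F \<in> HO n \<Longrightarrow> snd F i = Some j \<Longrightarrow> 1 \<le> j \<and> j < i \<and> i \<le> n"
  unfolding HO_def by blast

lemma HO_fst: "F \<in> HO n \<Longrightarrow> fst F = n"
  unfolding HO_def by blast

lemma HO_none: "G \<in> HO n \<Longrightarrow> \<not> (1 \<le> i \<and> i \<le> n) \<Longrightarrow> snd G i = None"
  by (cases "snd G i") (auto dest: HO_D)

lemma trancl_edges_decrease:
  fixes w :: "nat \<Rightarrow> nat"
  assumes "\<And>i j. snd F i = Some j \<Longrightarrow> w j < w i"
  shows "(a, b) \<in> (fedges F)\<^sup>+ \<Longrightarrow> w b < w a"
proof (induction rule: trancl_induct)
  case (base y) then show ?case using assms by (auto simp: fedges_def)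
next
  case (step y z) then show ?case using assms by (fastforce simp: fedges_def)
qed

lemma heap_ordered_iff_HO: "heap_ordered F \<longleftrightarrow> F \<in> HO (fst F)"
proof
  assume h: "heap_ordered F"
  show "F \<in> HO (fst F)"
  proof (rule HO_I)
    fix i j assume e: "snd F i = Some j"
    then have r: "(i, j) \<in> (fedges F)\<^sup>+" by (auto simp: fedges_def)
    then have "i \<noteq> j" using h unfolding heap_ordered_def ordered_forest_def by auto
    then have "j < i" using h r by (auto simp: heap_ordered_def reach_def)
    then show "1 \<le> j \<and> j < i \<and> i \<le> fst F"
      using h e by (auto simp: heap_ordered_def ordered_forest_def)
  qed simp
next
  assume h: "F \<in> HO (fst F)"
  have dec: "(a, b) \<in> (fedges F)\<^sup>+ \<Longrightarrow> id b < id a" for a b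
    by (rule trancl_edges_decrease) (use HO_D[OF h] in auto)
  show "heap_ordered F"
    unfolding heap_ordered_def ordered_forest_def reach_def
    using HO_D[OF h] dec by fastforce
qed

definition parent_choices :: "nat \<Rightarrow> nat option set" where
  "parent_choices n = insert None (Some ` {1..n})"

definition graft :: "nat \<Rightarrow> oforest \<Rightarrow> nat option \<Rightarrow> oforest" where
  "graft n G q = (Suc n, (snd G)(Suc n := q))"

lemma sum_parent_choices:
  "(\<Sum>q\<in>parent_choices n. f q) = f None + (\<Sum>m\<in>{1..n}. f (Some m))"
  unfolding parent_choices_def by (simp add: sum.reindex)

lemma HO_0: "HO 0 = {(0, \<lambda>_. None)}"
proof (intro set_eqI iffI)
  fix F assume F: "F \<in> HO 0"
  then have "snd F = (\<lambda>_. None)" using HO_none[OF F] by auto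
  then show "F \<in> {(0, \<lambda>_. None)}" using HO_fst[OF F] by (cases F) simp
qed (simp add: HO_def)

lemma graft_HO: "G \<in> HO n \<Longrightarrow> q \<in> parent_choices n \<Longrightarrow> graft n G q \<in> HO (Suc n)"
  by (rule HO_I) (auto simp: graft_def parent_choices_def split: if_splits dest: HO_D)

lemma HO_Suc: "HO (Suc n) = (\<lambda>(G, q). graft n G q) ` (HO n \<times> parent_choices n)"
proof (intro set_eqI iffI)
  fix F assume F: "F \<in> HO (Suc n)"
  let ?G = "(n, (snd F)(Suc n := None))"
  have "?G \<in> HO n"
  proof (rule HO_I)
    fix i j assume "snd ?G i = Some j"
    then have "i \<noteq> Suc n" "snd F i = Some j" by (auto split: if_splits)
    then show "1 \<le> j \<and> j < i \<and> i \<le> n" using HO_D[OF F] by force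
  qed simp
  moreover have "snd F (Suc n) \<in> parent_choices n"
  proof (cases "snd F (Suc n)")
    case (Some j)
    then show ?thesis using HO_D[OF F Some] by (auto simp: parent_choices_def)
  qed (simp add: parent_choices_def)
  moreover have "F = graft n ?G (snd F (Suc n))"
    using HO_fst[OF F] unfolding graft_def by (cases F) simp
  ultimately show "F \<in> (\<lambda>(G, q). graft n G q) ` (HO n \<times> parent_choices n)" by force
next
  fix F assume "F \<in> (\<lambda>(G, q). graft n G q) ` (HO n \<times> parent_choices n)"
  then show "F \<in> HO (Suc n)" using graft_HO by auto
qed

lemma graft_inj: "inj_on (\<lambda>(G, q). graft n G q) (HO n \<times> parent_choices n)"
proof (rule inj_onI, clarify)
  fix G q G' q' assume G: "G \<in> HO n" and G': "G' \<in> HO n" and eq: "graft n G q = graft n G' q'"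
  have upd: "(snd G)(Suc n := q) = (snd G')(Suc n := q')" using eq by (simp add: graft_def)
  then have "q = q'" by (metis fun_upd_same)
  moreover have "snd G i = snd G' i" for i
    using fun_cong[OF upd, of i] HO_none[OF G, of "Suc n"] HO_none[OF G', of "Suc n"]
    by (cases "i = Suc n") auto
  ultimately show "G = G' \<and> q = q'" using HO_fst[OF G] HO_fst[OF G'] by (simp add: prod_eq_iff fun_eq_iff)
qed

lemma finite_HO: "finite (HO n)"
  by (induction n) (auto simp: HO_0 HO_Suc parent_choices_def)

definition linext :: "oforest \<Rightarrow> (nat \<Rightarrow> nat) set" where
  "linext F = {w. w \<in> Sym (fst F) \<and> (\<forall>i j. snd F i = Some j \<longrightarrow> w j < w i)}"

lemma S_F_iff_linext:
  assumes F: "F \<in> HO n"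
  shows "s \<in> S_F F \<longleftrightarrow> s \<in> Sym n \<and> inv s \<in> linext F"
proof -
  have edge_reach: "reach F i j" if "snd F i = Some j" for i j
    using that HO_D[OF F that] by (auto simp: reach_def fedges_def intro: r_into_trancl')
  have "(\<forall>i j. reach F i j \<longrightarrow> inv s i > inv s j) \<longleftrightarrow> (\<forall>i j. snd F i = Some j \<longrightarrow> inv s j < inv s i)"
    using edge_reach trancl_edges_decrease[of F "inv s"] by (auto simp: reach_def)
  then show ?thesis
    unfolding S_F_def linext_def HO_fst[OF F] using Sym_inv[of s n] by blast
qed

text \<open>The coefficient of \<open>w\<^sup>-\<^sup>1\<close> in \<open>\<Theta>\<close> of the element of \<open>H\<^sub>h\<^sub>o\<close> whose coefficients on
  heap-ordered forests with \<open>n\<close> vertices are given by \<open>c\<close>.\<close>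

definition theta_coord :: "nat \<Rightarrow> (oforest \<Rightarrow> 'k::field) \<Rightarrow> (nat \<Rightarrow> nat) \<Rightarrow> 'k" where
  "theta_coord n c w = (\<Sum>F\<in>HO n. if w \<in> linext F then c F else 0)"

lemma theta_coord_scale: "theta_coord n (\<lambda>G. a * c G) w = a * theta_coord n c w"
  unfolding theta_coord_def sum_distrib_left by (rule sum.cong) auto

lemma theta_coord_diff: "theta_coord n (\<lambda>G. a G - b G) w = theta_coord n a w - theta_coord n b w"
  unfolding theta_coord_def by (simp add: sum_subtractf[symmetric] if_distrib cong: if_cong)

lemma linext_graft:
  assumes G: "G \<in> HO n" and q: "q \<in> parent_choices n" and w: "w \<in> Sym n"
    and j: "1 \<le> j" "j \<le> Suc n"
  shows "insert_top n w j \<in> linext (graft n G q) \<longleftrightarrow> w \<in> linext G \<and> (\<forall>m. q = Some m \<longrightarrow> w m < j)"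
proof -
  let ?v = "insert_top n w j"
  have old_edges: "(\<forall>i m. snd G i = Some m \<longrightarrow> ?v m < ?v i) \<longleftrightarrow> (\<forall>i m. snd G i = Some m \<longrightarrow> w m < w i)"
  proof -
    have "?v m < ?v i \<longleftrightarrow> w m < w i" if "snd G i = Some m" for i m
      using HO_D[OF G that] insert_top_less_iff[OF w, of m i j] by simp
    then show ?thesis by blast
  qed
  have new_edge: "?v m < ?v (Suc n) \<longleftrightarrow> w m < j" if "q = Some m" for m
    using that q by (auto simp: parent_choices_def insert_top_def)
  have "?v \<in> linext (graft n G q) \<longleftrightarrow>
      (\<forall>i m. snd G i = Some m \<longrightarrow> ?v m < ?v i) \<and> (\<forall>m. q = Some m \<longrightarrow> ?v m < ?v (Suc n))"
    using insert_top_Sym[OF w j] HO_none[OF G, of "Suc n"]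
    by (auto simp: linext_def graft_def split: if_splits)
  then show ?thesis
    using old_edges new_edge w HO_fst[OF G] by (auto simp: linext_def)
qed

text \<open>The recursion for \<open>theta_coord\<close>, obtained by splitting the forests of \<open>HO (Suc n)\<close>
  according to the parent of the top vertex: the values of \<open>theta_coord (Suc n) c\<close> at
  \<open>insert_top n w j\<close>, \<open>j = 1..Suc n\<close>, are the partial sums of a sequence made of
  coordinates of the forests left after removing the top vertex. Vanishing of all partial
  sums forces the sequence to vanish (injectivity); telescoping produces the dual basis.\<close>

lemma theta_coord_Suc:
  assumes w: "w \<in> Sym n" and j: "1 \<le> j" "j \<le> Suc n"
  shows "theta_coord (Suc n) c (insert_top n w j) = theta_coord n (\<lambda>G. c (graft n G None)) w +
     (\<Sum>i\<in>{1..<j}. theta_coord n (\<lambda>G. c (graft n G (Some (inv w i)))) w)"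
proof -
  let ?P = "parent_choices n"
  let ?t = "\<lambda>G q. if (\<forall>m. q = Some m \<longrightarrow> w m < j) then (if w \<in> linext G then c (graft n G q) else 0) else 0"
  have "theta_coord (Suc n) c (insert_top n w j) =
      (\<Sum>(G, q)\<in>HO n \<times> ?P. if insert_top n w j \<in> linext (graft n G q) then c (graft n G q) else 0)"
    unfolding theta_coord_def HO_Suc by (subst sum.reindex[OF graft_inj]) (simp add: case_prod_unfold)
  also have "\<dots> = (\<Sum>(G, q)\<in>HO n \<times> ?P. ?t G q)"
    by (rule sum.cong[OF refl]) (auto simp: linext_graft[OF _ _ w j])
  also have "\<dots> = (\<Sum>q\<in>?P. \<Sum>G\<in>HO n. ?t G q)"
    by (simp add: sum.cartesian_product[symmetric] sum.swap[of _ "HO n"])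
  also have "\<dots> = (\<Sum>q\<in>?P. if (\<forall>m. q = Some m \<longrightarrow> w m < j) then theta_coord n (\<lambda>G. c (graft n G q)) w else 0)"
    by (rule sum.cong[OF refl]) (auto simp: theta_coord_def)
  also have "\<dots> = theta_coord n (\<lambda>G. c (graft n G None)) w +
     (\<Sum>m\<in>{1..n}. if w m < j then theta_coord n (\<lambda>G. c (graft n G (Some m))) w else 0)"
    unfolding sum_parent_choices by simp
  finally show ?thesis unfolding sum_values_below[OF w j(2)] .
qed

lemma theta_coord_0: "w \<in> Sym 0 \<Longrightarrow> theta_coord 0 c w = c (0, \<lambda>_. None)"
  unfolding theta_coord_def HO_0 by (simp add: linext_def)

lemma theta_coord_injective:
  "(\<forall>w\<in>Sym n. theta_coord n c w = 0) \<Longrightarrow> (\<forall>F\<in>HO n. c F = 0)"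
proof (induction n arbitrary: c)
  case 0
  have "id \<in> Sym 0" by (simp add: Sym_0)
  then have "c (0, \<lambda>_. None) = 0" using "0.prems" theta_coord_0[of id c] by simp
  then show ?case by (simp add: HO_0)
next
  case (Suc n)
  define X where "X q w = theta_coord n (\<lambda>G. c (graft n G q)) w" for q w
  have partial: "X None w + (\<Sum>i\<in>{1..<j}. X (Some (inv w i)) w) = 0"
    if w: "w \<in> Sym n" and j: "1 \<le> j" "j \<le> Suc n" for w j
    using Suc.prems insert_top_Sym[OF w j] theta_coord_Suc[OF w j, of c]
    unfolding X_def by simp
  have X_None: "X None w = 0" if w: "w \<in> Sym n" for w
    using partial[OF w, of 1] by simp
  have X_Some: "X (Some m) w = 0" if w: "w \<in> Sym n" and m: "1 \<le> m" "m \<le> n" for w m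
  proof -
    have r: "1 \<le> w m" "w m \<le> n" using Sym_range[OF w m] by auto
    have "X None w + (\<Sum>i\<in>{1..<w m}. X (Some (inv w i)) w) + X (Some (inv w (w m))) w = 0"
      using partial[OF w, of "Suc (w m)"] r by (simp add: add.assoc)
    then show ?thesis using partial[OF w, of "w m"] r by (simp add: Sym_inverses(2)[OF w])
  qed
  show ?case
  proof
    fix F assume "F \<in> HO (Suc n)"
    then obtain G q where G: "G \<in> HO n" and q: "q \<in> parent_choices n" and F: "F = graft n G q"
      unfolding HO_Suc by auto
    have "\<forall>w\<in>Sym n. X q w = 0" using q X_None X_Some by (auto simp: parent_choices_def)
    then show "c F = 0" using Suc.IH[of "\<lambda>G. c (graft n G q)"] G F unfolding X_def by blast
  qed
qed

lemma theta_coord_graft_product: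
  "theta_coord n (\<lambda>G. \<alpha> (snd (graft n G q) (Suc n)) * d (n, (snd (graft n G q))(Suc n := None))) w =
    \<alpha> q * theta_coord n d w"
proof -
  have "(n, (snd G)(Suc n := q, Suc n := None)) = G" if G: "G \<in> HO n" for G
    using HO_none[OF G, of "Suc n"] HO_fst[OF G] by (cases G) (simp add: fun_upd_idem)
  then have "theta_coord n (\<lambda>G. \<alpha> (snd (graft n G q) (Suc n)) * d (n, (snd (graft n G q))(Suc n := None))) w =
      theta_coord n (\<lambda>G. \<alpha> q * d G) w"
    unfolding theta_coord_def graft_def by (intro sum.cong) auto
  then show ?thesis by (simp add: theta_coord_scale)
qed

lemma theta_coord_dual_basis:
  assumes "v \<in> Sym n"
  shows "\<exists>c::oforest \<Rightarrow> 'k::field. \<forall>w\<in>Sym n. theta_coord n c w = (if w = v then 1 else 0)"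
  using assms
proof (induction n arbitrary: v)
  case 0
  then have "\<forall>w\<in>Sym 0. w = v" by (simp add: Sym_0)
  then show ?case by (intro exI[of _ "\<lambda>_. 1"]) (simp add: theta_coord_0)
next
  case (Suc n)
  obtain v0 j0 where v0: "v0 \<in> Sym n" and j0: "1 \<le> j0" "j0 \<le> Suc n" and v: "v = insert_top n v0 j0"
    using Suc.prems unfolding Sym_Suc by auto
  obtain d :: "oforest \<Rightarrow> 'k" where d: "\<forall>w\<in>Sym n. theta_coord n d w = (if w = v0 then 1 else 0)"
    using Suc.IH[OF v0] by blast
  text \<open>Weights \<open>\<alpha>\<close> for the position of the top vertex, chosen so that the partial sums
    telescope to the indicator \<open>f\<close> of \<open>j0\<close>.\<close>
  define f :: "nat \<Rightarrow> 'k" where "f j = (if j = j0 then 1 else 0)" for j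
  define \<alpha> where "\<alpha> q = (case q of None \<Rightarrow> f 1 | Some m \<Rightarrow> f (Suc (v0 m)) - f (v0 m))" for q
  define c :: "oforest \<Rightarrow> 'k" where "c F = \<alpha> (snd F (Suc n)) * d (n, (snd F)(Suc n := None))" for F
  have coord_graft: "theta_coord n (\<lambda>G. c (graft n G q)) w = \<alpha> q * (if w = v0 then 1 else 0)"
    if w: "w \<in> Sym n" for q w
    using theta_coord_graft_product[of n \<alpha> q d w] d w unfolding c_def by simp
  have telescope: "f 1 + (\<Sum>i\<in>{1..<j}. f (Suc i) - f i) = f j" if "1 \<le> j" for j
    using sum_Suc_diff'[OF that, of f] by simp
  show ?case
  proof (rule exI[of _ c], intro ballI)
    fix w' assume "w' \<in> Sym (Suc n)"
    then obtain w j where w: "w \<in> Sym n" and j: "1 \<le> j" "j \<le> Suc n" and w': "w' = insert_top n w j"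
      unfolding Sym_Suc by auto
    have "w' = v \<longleftrightarrow> w = v0 \<and> j = j0"
      using insert_top_inj[of n] w j v0 j0 unfolding w' v inj_on_def by auto
    moreover have "theta_coord (Suc n) c w' = (if w = v0 then f j else 0)"
      using telescope[OF j(1)] Sym_inverses(1)[OF v0]
      by (simp add: w' theta_coord_Suc[OF w j] coord_graft[OF w] \<alpha>_def)
    ultimately show "theta_coord (Suc n) c w' = (if w' = v then 1 else 0)" by (simp add: f_def)
  qed
qed

lemma keys_H_ho: "x \<in> H_ho \<Longrightarrow> F \<in> Poly_Mapping.keys x \<Longrightarrow> F \<in> HO (fst F)"
  unfolding H_ho_def using heap_ordered_iff_HO by blast

lemma H_ho_if_keys_HO: "Poly_Mapping.keys x \<subseteq> HO n \<Longrightarrow> x \<in> H_ho"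
  unfolding H_ho_def using heap_ordered_iff_HO HO_fst by fastforce

lemma lookup_Theta:
  "Poly_Mapping.lookup (Theta x) (n, s) =
     (\<Sum>F\<in>Poly_Mapping.keys x. if fst F = n \<and> s \<in> S_F F then Poly_Mapping.lookup x F else 0)"
proof -
  have fin: "finite (S_F F)" for F
    by (rule finite_subset[OF _ finite_Sym[of "fst F"]]) (auto simp: S_F_def)
  have "(\<Sum>s'\<in>S_F F. if (fst F, s') = (n, s) then a else 0) = (if fst F = n \<and> s \<in> S_F F then a else 0)"
    for F and a :: 'a
  proof -
    have "(\<Sum>s'\<in>S_F F. if (fst F, s') = (n, s) then a else 0) =
        (\<Sum>s'\<in>S_F F. if s' = s then (if fst F = n then a else 0) else 0)"
      by (rule sum.cong) auto
    then show ?thesis by (simp add: sum.delta[OF fin])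
  qed
  then show ?thesis unfolding Theta_def lookup_sum lookup_single when_def by simp
qed

lemma lookup_Theta_H_ho:
  assumes x: "x \<in> H_ho" and w: "w \<in> Sym n"
  shows "Poly_Mapping.lookup (Theta x) (n, inv w) = theta_coord n (Poly_Mapping.lookup x) w"
proof -
  define g where "g F = (if F \<in> HO n \<and> w \<in> linext F then Poly_Mapping.lookup x F else 0)" for F
  have fin: "finite (Poly_Mapping.keys x \<union> HO n)" by (simp add: finite_HO)
  have "fst F = n \<and> inv w \<in> S_F F \<longleftrightarrow> F \<in> HO n \<and> w \<in> linext F" if "F \<in> Poly_Mapping.keys x" for F
    using keys_H_ho[OF x that] S_F_iff_linext[of F n "inv w"] Sym_inv[OF w] Sym_inv_inv[OF w] HO_fst
    by metis
  then have "Poly_Mapping.lookup (Theta x) (n, inv w) = (\<Sum>F\<in>Poly_Mapping.keys x. g F)"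
    unfolding lookup_Theta g_def by (intro sum.cong) auto
  also have "\<dots> = (\<Sum>F\<in>Poly_Mapping.keys x \<union> HO n. g F)"
    by (rule sum.mono_neutral_left[OF fin]) (auto simp: g_def in_keys_iff)
  also have "\<dots> = (\<Sum>F\<in>HO n. g F)"
    by (rule sum.mono_neutral_right[OF fin]) (auto simp: g_def in_keys_iff)
  also have "\<dots> = theta_coord n (Poly_Mapping.lookup x) w"
    unfolding theta_coord_def g_def by (intro sum.cong) auto
  finally show ?thesis .
qed

lemma lookup_Theta_not_Sym:
  "s \<notin> Sym n \<Longrightarrow> Poly_Mapping.lookup (Theta x) (n, s) = 0"
  unfolding lookup_Theta by (auto simp: S_F_def intro: sum.neutral)

lemma H_ho_eqI:
  assumes x: "x \<in> H_ho" and y: "y \<in> H_ho"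
    and eq: "\<And>n w. w \<in> Sym n \<Longrightarrow>
      theta_coord n (Poly_Mapping.lookup x) w = theta_coord n (Poly_Mapping.lookup y) w"
  shows "x = y"
proof (rule poly_mapping_eqI)
  fix F
  show "Poly_Mapping.lookup x F = Poly_Mapping.lookup y F"
  proof (cases "F \<in> HO (fst F)")
    case True
    have "\<forall>w\<in>Sym (fst F).
        theta_coord (fst F) (\<lambda>G. Poly_Mapping.lookup x G - Poly_Mapping.lookup y G) w = 0"
      using eq by (simp add: theta_coord_diff)
    from theta_coord_injective[OF this] True show ?thesis by simp
  next
    case False
    then have "F \<notin> Poly_Mapping.keys x" "F \<notin> Poly_Mapping.keys y" using keys_H_ho x y by blast+
    then show ?thesis by (simp add: in_keys_iff)
  qed
qed

lemma Theta_inj_on_H_ho: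
  assumes "x \<in> H_ho" and "y \<in> H_ho" and "Theta x = Theta y"
  shows "x = y"
proof (rule H_ho_eqI[OF assms(1,2)])
  fix n w assume "w \<in> Sym n"
  then show "theta_coord n (Poly_Mapping.lookup x) w = theta_coord n (Poly_Mapping.lookup y) w"
    using lookup_Theta_H_ho[OF assms(1)] lookup_Theta_H_ho[OF assms(2)] assms(3) by metis
qed

lemma theta_coord_other_degree:
  assumes "Poly_Mapping.keys x \<subseteq> HO m" and "n \<noteq> m"
  shows "theta_coord n (Poly_Mapping.lookup x) w = 0"
  unfolding theta_coord_def
proof (rule sum.neutral, intro ballI)
  fix F assume "F \<in> HO n"
  then have "F \<notin> HO m" using assms(2) HO_fst by blast
  then show "(if w \<in> linext F then Poly_Mapping.lookup x F else 0) = 0"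
    using assms(1) by (auto simp: in_keys_iff)
qed

lemma theta_coord_sum:
  assumes "finite I"
  shows "theta_coord n (Poly_Mapping.lookup (\<Sum>z\<in>I. f z)) w =
    (\<Sum>z\<in>I. theta_coord n (Poly_Mapping.lookup (f z)) w)"
proof -
  have "theta_coord n (Poly_Mapping.lookup (\<Sum>z\<in>I. f z)) w =
      (\<Sum>F\<in>HO n. \<Sum>z\<in>I. if w \<in> linext F then Poly_Mapping.lookup (f z) F else 0)"
    unfolding theta_coord_def lookup_sum by (intro sum.cong) auto
  also have "\<dots> = (\<Sum>z\<in>I. theta_coord n (Poly_Mapping.lookup (f z)) w)"
    unfolding theta_coord_def by (rule sum.swap)
  finally show ?thesis .
qed

lemma Theta_single:
  assumes x: "x \<in> H_ho" and keys: "Poly_Mapping.keys x \<subseteq> HO n" and v: "v \<in> Sym n"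
    and coord: "\<forall>w\<in>Sym n. theta_coord n (Poly_Mapping.lookup x) w = (if w = v then 1 else 0)"
  shows "Theta x = Poly_Mapping.single (n, inv v) 1"
proof (rule poly_mapping_eqI, clarify)
  fix m s
  show "Poly_Mapping.lookup (Theta x) (m, s) = Poly_Mapping.lookup (Poly_Mapping.single (n, inv v) 1) (m, s)"
  proof (cases "s \<in> Sym m")
    case True
    then have "Poly_Mapping.lookup (Theta x) (m, s) = theta_coord m (Poly_Mapping.lookup x) (inv s)"
      using lookup_Theta_H_ho[OF x Sym_inv[OF True]] Sym_inv_inv[OF True] by simp
    also have "\<dots> = (if m = n \<and> s = inv v then 1 else 0)"
    proof (cases "m = n")
      case True
      then have s: "s \<in> Sym n" using \<open>s \<in> Sym m\<close> by simp
      have "inv s = v \<longleftrightarrow> s = inv v"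
        using Sym_inv_eq_iff[OF s Sym_inv[OF v]] Sym_inv_inv[OF v] by simp
      then show ?thesis using coord Sym_inv[OF s] True by auto
    qed (simp add: theta_coord_other_degree[OF keys])
    finally show ?thesis by (simp add: lookup_single when_def)
  next
    case False
    then show ?thesis using Sym_inv[OF v] by (auto simp: lookup_Theta_not_Sym lookup_single when_def)
  qed
qed

lemma Tsig_dual_basis:
  assumes v: "v \<in> Sym n"
  shows "(Tsig n v :: oforest \<Rightarrow>\<^sub>0 'k::field) \<in> H_ho"
    and "Poly_Mapping.keys (Tsig n v :: oforest \<Rightarrow>\<^sub>0 'k) \<subseteq> HO n"
    and "\<And>w. w \<in> Sym n \<Longrightarrow>
      theta_coord n (Poly_Mapping.lookup (Tsig n v :: oforest \<Rightarrow>\<^sub>0 'k)) w = (if w = v then 1 else 0)"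
proof -
  obtain c :: "oforest \<Rightarrow> 'k" where c: "\<forall>w\<in>Sym n. theta_coord n c w = (if w = v then 1 else 0)"
    using theta_coord_dual_basis[OF v] by blast
  define x :: "oforest \<Rightarrow>\<^sub>0 'k" where "x = (\<Sum>F\<in>HO n. Poly_Mapping.single F (c F))"
  have lookup_x: "Poly_Mapping.lookup x F = (if F \<in> HO n then c F else 0)" for F
    unfolding x_def lookup_sum lookup_single when_def by (simp add: sum.delta[OF finite_HO])
  have keys: "Poly_Mapping.keys x \<subseteq> HO n" by (auto simp: in_keys_iff lookup_x split: if_splits)
  have H: "x \<in> H_ho" by (rule H_ho_if_keys_HO[OF keys])
  have coord: "\<forall>w\<in>Sym n. theta_coord n (Poly_Mapping.lookup x) w = (if w = v then 1 else 0)"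
  proof
    fix w assume "w \<in> Sym n"
    have "theta_coord n (Poly_Mapping.lookup x) w = theta_coord n c w"
      unfolding theta_coord_def lookup_x by (intro sum.cong) auto
    then show "theta_coord n (Poly_Mapping.lookup x) w = (if w = v then 1 else 0)"
      using c \<open>w \<in> Sym n\<close> by simp
  qed
  have "Tsig n v = x"
    unfolding Tsig_def
  proof (rule the_equality)
    show "x \<in> H_ho \<and> Theta x = Poly_Mapping.single (n, inv v) 1"
      using H Theta_single[OF H keys v coord] by blast
    show "y = x" if "y \<in> H_ho \<and> Theta y = Poly_Mapping.single (n, inv v) 1" for y
      using that Theta_inj_on_H_ho[OF _ H] Theta_single[OF H keys v coord] by auto
  qed
  then show "(Tsig n v :: oforest \<Rightarrow>\<^sub>0 'k) \<in> H_ho" "Poly_Mapping.keys (Tsig n v :: oforest \<Rightarrow>\<^sub>0 'k) \<subseteq> HO n"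
    and "\<And>w. w \<in> Sym n \<Longrightarrow>
      theta_coord n (Poly_Mapping.lookup (Tsig n v :: oforest \<Rightarrow>\<^sub>0 'k)) w = (if w = v then 1 else 0)"
    using H keys coord by auto
qed

text \<open>Standardization: \<open>std g m\<close> replaces the values of \<open>g\<close> on \<open>{1..m}\<close> by their ranks, so
  that for injective \<open>g\<close> it is the unique permutation of \<open>{1..m}\<close> in the same relative
  order as \<open>g\<close>. It gives the coproduct of \<open>FQSym\<close> (standardized prefix and suffix).\<close>

definition std :: "(nat \<Rightarrow> nat) \<Rightarrow> nat \<Rightarrow> nat \<Rightarrow> nat" where
  "std g m i = (if 1 \<le> i \<and> i \<le> m then card {j\<in>{1..m}. g j \<le> g i} else i)"

lemma std_less_iff:
  assumes g: "inj_on g {1..m}" and i: "1 \<le> i" "i \<le> m" and j: "1 \<le> j" "j \<le> m"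
  shows "std g m i < std g m j \<longleftrightarrow> g i < g j"
proof
  assume lt: "g i < g j"
  have "j \<in> {x\<in>{1..m}. g x \<le> g j}" "j \<notin> {x\<in>{1..m}. g x \<le> g i}" using lt j by auto
  moreover have "{x\<in>{1..m}. g x \<le> g i} \<subseteq> {x\<in>{1..m}. g x \<le> g j}" using lt by auto
  ultimately have "{x\<in>{1..m}. g x \<le> g i} \<subset> {x\<in>{1..m}. g x \<le> g j}" by blast
  then have "card {x\<in>{1..m}. g x \<le> g i} < card {x\<in>{1..m}. g x \<le> g j}"
    by (rule psubset_card_mono[rotated]) simp
  then show "std g m i < std g m j" using i j by (simp add: std_def)
next
  assume lt: "std g m i < std g m j"
  show "g i < g j"
  proof (rule ccontr)
    assume "\<not> g i < g j"
    then have "card {x\<in>{1..m}. g x \<le> g j} \<le> card {x\<in>{1..m}. g x \<le> g i}"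
      by (intro card_mono) auto
    then show False using lt i j by (simp add: std_def)
  qed
qed

lemma std_Sym:
  assumes g: "inj_on g {1..m}"
  shows "std g m \<in> Sym m"
  unfolding Sym_def mem_Collect_eq
proof (rule inj_imp_permutes)
  show "inj_on (std g m) {1..m}"
  proof (rule inj_onI)
    fix i j assume i: "i \<in> {1..m}" and j: "j \<in> {1..m}" and eq: "std g m i = std g m j"
    then have "g i = g j" using std_less_iff[OF g, of i j] std_less_iff[OF g, of j i] by auto
    then show "i = j" using g i j by (auto dest: inj_onD)
  qed
  show "std g m x \<in> {1..m}" if x: "x \<in> {1..m}" for x
  proof -
    have "x \<in> {j\<in>{1..m}. g j \<le> g x}" using x by simp
    moreover have "finite {j\<in>{1..m}. g j \<le> g x}" by simp
    ultimately have "card {j\<in>{1..m}. g j \<le> g x} \<ge> 1"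
      by (metis One_nat_def Suc_leI card_gt_0_iff empty_iff)
    moreover have "card {j\<in>{1..m}. g j \<le> g x} \<le> card {1..m}" by (rule card_mono) auto
    ultimately show ?thesis using x by (simp add: std_def)
  qed
qed (auto simp: std_def)

lemma increasing_Sym_eq_id:
  assumes p: "p \<in> Sym m" and inc: "\<And>i j. 1 \<le> i \<Longrightarrow> i < j \<Longrightarrow> j \<le> m \<Longrightarrow> p i < p j"
  shows "p = id"
proof
  fix x
  have up: "i \<le> m \<longrightarrow> i \<le> p i" if "1 \<le> i" for i
    using that
  proof (induction i rule: dec_induct)
    case base then show ?case using Sym_range[OF p, of 1] by simp
  next
    case (step i)
    then show ?case using inc[of i "Suc i"] by fastforce
  qed
  have down: "m - d \<ge> 1 \<longrightarrow> p (m - d) \<le> m - d" for d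
  proof (induction d)
    case 0 then show ?case using Sym_range[OF p, of m] by simp
  next
    case (Suc d)
    show ?case
    proof
      assume a: "m - Suc d \<ge> 1"
      then have "p (m - Suc d) < p (m - d)" using inc[of "m - Suc d" "m - d"] by simp
      moreover have "m - d = Suc (m - Suc d)" using a by arith
      ultimately show "p (m - Suc d) \<le> m - Suc d" using Suc a by simp
    qed
  qed
  show "p x = id x"
  proof (cases "1 \<le> x \<and> x \<le> m")
    case True
    then show ?thesis using down[of "m - x"] up[of x] by simp
  qed (simp add: Sym_out[OF p])
qed

lemma std_eq_iff:
  assumes g: "inj_on g {1..m}" and p: "p \<in> Sym m"
  shows "std g m = p \<longleftrightarrow> (\<forall>i j. 1 \<le> i \<and> i < j \<and> j \<le> m \<longrightarrow> g (inv p i) < g (inv p j))"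
proof -
  have ip: "inv p \<in> Sym m" using p by (rule Sym_inv)
  have range: "1 \<le> inv p i" "inv p i \<le> m" if "1 \<le> i" "i \<le> m" for i
    using Sym_range[OF ip that] by auto
  have "std g m = p \<longleftrightarrow> std g m \<circ> inv p = id"
    using Sym_inverses[OF p] by (auto simp: fun_eq_iff) metis
  also have "\<dots> \<longleftrightarrow> (\<forall>i j. 1 \<le> i \<and> i < j \<and> j \<le> m \<longrightarrow> std g m (inv p i) < std g m (inv p j))"
  proof
    assume "\<forall>i j. 1 \<le> i \<and> i < j \<and> j \<le> m \<longrightarrow> std g m (inv p i) < std g m (inv p j)"
    then show "std g m \<circ> inv p = id"
      by (intro increasing_Sym_eq_id[OF Sym_comp[OF std_Sym[OF g] ip]]) auto
  qed (auto simp: fun_eq_iff)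
  also have "\<dots> \<longleftrightarrow> (\<forall>i j. 1 \<le> i \<and> i < j \<and> j \<le> m \<longrightarrow> g (inv p i) < g (inv p j))"
  proof -
    have "std g m (inv p i) < std g m (inv p j) \<longleftrightarrow> g (inv p i) < g (inv p j)"
      if "1 \<le> i" "i < j" "j \<le> m" for i j
      using that std_less_iff[OF g range range, of i j] by simp
    then show ?thesis by blast
  qed
  finally show ?thesis .
qed

lemma Sh_D:
  assumes "e \<in> Sh k l"
  shows "e \<in> Sym (k + l)"
    and "\<And>i j. 1 \<le> i \<Longrightarrow> i < j \<Longrightarrow> j \<le> k \<Longrightarrow> inv e i < inv e j"
    and "\<And>i j. k + 1 \<le> i \<Longrightarrow> i < j \<Longrightarrow> j \<le> k + l \<Longrightarrow> inv e i < inv e j"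
  using assms unfolding Sh_def by blast+

lemma Sh_Sym: "Sh k l \<subseteq> Sym (k + l)"
  by (auto dest: Sh_D(1))

lemma finite_Sh: "finite (Sh k l)"
  by (rule finite_subset[OF Sh_Sym finite_Sym])

lemma ptensor_comp:
  assumes s': "s' \<in> Sym k" and t': "t' \<in> Sym l"
  shows "ptensor k s t \<circ> ptensor k s' t' = ptensor k (s \<circ> s') (t \<circ> t')"
proof
  fix i
  show "(ptensor k s t \<circ> ptensor k s' t') i = ptensor k (s \<circ> s') (t \<circ> t') i"
  proof (cases "i \<le> k")
    case True
    have "s' i \<le> k"
      using True Sym_range[OF s', of i] Sym_out[OF s', of i] by (cases "i = 0") auto
    then show ?thesis using True by (simp add: ptensor_def)
  next
    case False
    then have "1 \<le> t' (i - k)" using Sym_pos[OF t', of "i - k"] by simp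
    then show ?thesis using False by (simp add: ptensor_def)
  qed
qed

lemma ptensor_id: "ptensor k id id = id"
  by (auto simp: ptensor_def fun_eq_iff)

lemma ptensor_inverse:
  assumes s: "s \<in> Sym k" and t: "t \<in> Sym l"
  shows "ptensor k (inv s) (inv t) \<circ> ptensor k s t = id"
    and "ptensor k s t \<circ> ptensor k (inv s) (inv t) = id"
  using ptensor_comp[OF s t, of "inv s" "inv t"] ptensor_comp[OF Sym_inv[OF s] Sym_inv[OF t], of s t]
    s t ptensor_id unfolding Sym_def by (simp_all add: permutes_inv_o)

lemma ptensor_Sym:
  assumes s: "s \<in> Sym k" and t: "t \<in> Sym l"
  shows "ptensor k s t \<in> Sym (k + l)"
  unfolding Sym_def mem_Collect_eq
proof (rule inj_imp_permutes)
  show "inj_on (ptensor k s t) {1..k + l}"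
    by (rule inj_on_inverseI[where g = "ptensor k (inv s) (inv t)"])
      (simp add: pointfree_idE[OF ptensor_inverse(1)[OF s t]])
  show "ptensor k s t x \<in> {1..k + l}" if x: "x \<in> {1..k + l}" for x
  proof (cases "x \<le> k")
    case True
    then show ?thesis using Sym_range[OF s, of x] x by (simp add: ptensor_def)
  next
    case False
    then have "1 \<le> x - k" "x - k \<le> l" using x by auto
    then show ?thesis using Sym_range[OF t, of "x - k"] False by (simp add: ptensor_def)
  qed
  show "ptensor k s t x = x" if x: "x \<notin> {1..k + l}" for x
  proof (cases "x \<le> k")
    case True
    then show ?thesis using x Sym_out[OF s, of x] by (simp add: ptensor_def)
  next
    case False
    then have "\<not> (1 \<le> x - k \<and> x - k \<le> l)" using x by auto
    then show ?thesis using Sym_out[OF t, of "x - k"] False by (simp add: ptensor_def)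
  qed
qed simp

lemma ptensor_inv:
  assumes s: "s \<in> Sym k" and t: "t \<in> Sym l"
  shows "inv (ptensor k s t) = ptensor k (inv s) (inv t)"
  using inv_unique_comp[OF ptensor_inverse(2,1)[OF s t]] .

text \<open>A permutation \<open>\<zeta>\<close> with \<open>(\<sigma> \<otimes> \<tau>) = \<zeta> \<circ> u\<close> is a shuffle exactly when \<open>\<sigma>\<close> and \<open>\<tau>\<close> are the
  standardizations of the two blocks of \<open>u\<close>: this is the unique shuffle accounting for
  \<open>u\<close> in the product of \<open>FQSym\<close>.\<close>

lemma ptensor_comp_inv_Sh_iff:
  assumes s: "s \<in> Sym k" and t: "t \<in> Sym l" and u: "u \<in> Sym (k + l)"
  shows "ptensor k s t \<circ> inv u \<in> Sh k l \<longleftrightarrow> std u k = s \<and> std (\<lambda>i. u (k + i)) l = t"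
proof -
  let ?P = "ptensor k s t"
  have P: "?P \<in> Sym (k + l)" by (rule ptensor_Sym[OF s t])
  have iu: "inv u \<in> Sym (k + l)" using u by (rule Sym_inv)
  have inv_z: "inv (?P \<circ> inv u) = u \<circ> ptensor k (inv s) (inv t)"
    using o_inv_distrib[OF Sym_bij[OF P] Sym_bij[OF iu]] Sym_inv_inv[OF u] ptensor_inv[OF s t] by simp
  have first_block: "(\<forall>i j. 1 \<le> i \<and> i < j \<and> j \<le> k \<longrightarrow> inv (?P \<circ> inv u) i < inv (?P \<circ> inv u) j) \<longleftrightarrow>
       (\<forall>i j. 1 \<le> i \<and> i < j \<and> j \<le> k \<longrightarrow> u (inv s i) < u (inv s j))"
    unfolding inv_z by (auto simp: ptensor_def)
  have second_block:
    "(\<forall>i j. k + 1 \<le> i \<and> i < j \<and> j \<le> k + l \<longrightarrow> inv (?P \<circ> inv u) i < inv (?P \<circ> inv u) j) \<longleftrightarrow>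
       (\<forall>i j. 1 \<le> i \<and> i < j \<and> j \<le> l \<longrightarrow> u (k + inv t i) < u (k + inv t j))"
  proof
    assume a: "\<forall>i j. k + 1 \<le> i \<and> i < j \<and> j \<le> k + l \<longrightarrow> inv (?P \<circ> inv u) i < inv (?P \<circ> inv u) j"
    show "\<forall>i j. 1 \<le> i \<and> i < j \<and> j \<le> l \<longrightarrow> u (k + inv t i) < u (k + inv t j)"
    proof (intro allI impI)
      fix i j assume ij: "1 \<le> i \<and> i < j \<and> j \<le> l"
      then have "inv (?P \<circ> inv u) (k + i) < inv (?P \<circ> inv u) (k + j)" using a by auto
      then show "u (k + inv t i) < u (k + inv t j)" using ij unfolding inv_z by (simp add: ptensor_def)
    qed
  next
    assume a: "\<forall>i j. 1 \<le> i \<and> i < j \<and> j \<le> l \<longrightarrow> u (k + inv t i) < u (k + inv t j)"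
    show "\<forall>i j. k + 1 \<le> i \<and> i < j \<and> j \<le> k + l \<longrightarrow> inv (?P \<circ> inv u) i < inv (?P \<circ> inv u) j"
    proof (intro allI impI)
      fix i j assume ij: "k + 1 \<le> i \<and> i < j \<and> j \<le> k + l"
      then have "1 \<le> i - k \<and> i - k < j - k \<and> j - k \<le> l" by auto
      then have "u (k + inv t (i - k)) < u (k + inv t (j - k))" using a by blast
      then show "inv (?P \<circ> inv u) i < inv (?P \<circ> inv u) j" using ij unfolding inv_z by (simp add: ptensor_def)
    qed
  qed
  have "?P \<circ> inv u \<in> Sh k l \<longleftrightarrow>
      (\<forall>i j. 1 \<le> i \<and> i < j \<and> j \<le> k \<longrightarrow> u (inv s i) < u (inv s j)) \<and>
      (\<forall>i j. 1 \<le> i \<and> i < j \<and> j \<le> l \<longrightarrow> u (k + inv t i) < u (k + inv t j))"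
    unfolding Sh_def using Sym_comp[OF P iu] first_block second_block by simp
  also have "\<dots> \<longleftrightarrow> std u k = s \<and> std (\<lambda>i. u (k + i)) l = t"
    using std_eq_iff[OF Sym_inj_on[OF u] s] std_eq_iff[OF Sym_shift_inj_on[OF u] t] by simp
  finally show ?thesis .
qed

lemma inv_comp_eq_iff:
  assumes z: "z \<in> Sym n" and w: "w \<in> Sym n" and e: "e \<in> Sym n"
  shows "w = inv z \<circ> P \<circ> e \<longleftrightarrow> z = P \<circ> inv (w \<circ> inv e)"
proof -
  have "inv (w \<circ> inv e) = e \<circ> inv w"
    using o_inv_distrib[OF Sym_bij[OF w] Sym_bij[OF Sym_inv[OF e]]] Sym_inv_inv[OF e] by simp
  moreover have "w = inv z \<circ> P \<circ> e \<longleftrightarrow> z = P \<circ> e \<circ> inv w"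
    using Sym_inverses[OF z] Sym_inverses[OF w] by (auto simp: fun_eq_iff) metis+
  ultimately show ?thesis by (simp add: o_assoc)
qed

lemma snd_fmul:
  "snd (fmul F G) i = (if i \<le> fst F then snd F i else map_option (\<lambda>j. j + fst F) (snd G (i - fst F)))"
  by (simp add: fmul_def)

lemma fmul_edge:
  assumes F: "F \<in> HO k" and G: "G \<in> HO l" and e: "snd (fmul F G) i = Some j"
  shows "(1 \<le> j \<and> j < i \<and> i \<le> k) \<or> (k < j \<and> j < i \<and> i \<le> k + l)"
proof (cases "i \<le> k")
  case True
  then have "snd F i = Some j" using e HO_fst[OF F] by (simp add: snd_fmul)
  then show ?thesis using HO_D[OF F] by blast
next
  case False
  then obtain j' where "snd G (i - k) = Some j'" "j = j' + k" using e HO_fst[OF F] by (auto simp: snd_fmul)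
  then show ?thesis using HO_D[OF G] False by fastforce
qed

text \<open>Edge conditions only see the relative order of the labels, so they can be tested on
  the standardization.\<close>

lemma std_linext_iff:
  assumes F: "F \<in> HO m" and g: "inj_on g {1..m}"
  shows "std g m \<in> linext F \<longleftrightarrow> (\<forall>i j. snd F i = Some j \<longrightarrow> g j < g i)"
proof -
  have "std g m j < std g m i \<longleftrightarrow> g j < g i" if "snd F i = Some j" for i j
    using HO_D[OF F that] std_less_iff[OF g, of j i] by simp
  then show ?thesis unfolding linext_def HO_fst[OF F] using std_Sym[OF g] by blast
qed

lemma linext_fmul:
  assumes F: "F \<in> HO k" and G: "G \<in> HO l" and u: "u \<in> Sym (k + l)"
  shows "u \<in> linext (fmul F G) \<longleftrightarrow> std u k \<in> linext F \<and> std (\<lambda>i. u (k + i)) l \<in> linext G"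
proof -
  have fF: "fst F = k" and fG: "fst G = l" using HO_fst[OF F] HO_fst[OF G] .
  have "u \<in> linext (fmul F G) \<longleftrightarrow> (\<forall>i j. snd (fmul F G) i = Some j \<longrightarrow> u j < u i)"
    unfolding linext_def using u fF fG by (simp add: fmul_def)
  also have "\<dots> \<longleftrightarrow> (\<forall>i j. snd F i = Some j \<longrightarrow> u j < u i) \<and>
      (\<forall>i j. snd G i = Some j \<longrightarrow> u (k + j) < u (k + i))"
  proof (intro iffI conjI allI impI)
    fix i j assume a: "\<forall>i j. snd (fmul F G) i = Some j \<longrightarrow> u j < u i" and e: "snd F i = Some j"
    have "snd (fmul F G) i = Some j" using e fF HO_D[OF F e] by (simp add: snd_fmul)
    then show "u j < u i" using a by blast
  next
    fix i j assume a: "\<forall>i j. snd (fmul F G) i = Some j \<longrightarrow> u j < u i" and e: "snd G i = Some j"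
    have "snd (fmul F G) (k + i) = Some (k + j)" using e fF HO_D[OF G e] by (simp add: snd_fmul add.commute)
    then show "u (k + j) < u (k + i)" using a by blast
  next
    fix i j
    assume a: "(\<forall>i j. snd F i = Some j \<longrightarrow> u j < u i) \<and> (\<forall>i j. snd G i = Some j \<longrightarrow> u (k + j) < u (k + i))"
      and e: "snd (fmul F G) i = Some j"
    show "u j < u i"
    proof (cases "i \<le> k")
      case True
      then have "snd F i = Some j" using e fF by (simp add: snd_fmul)
      then show ?thesis using a by blast
    next
      case False
      then obtain j' where j': "snd G (i - k) = Some j'" "j = j' + k" using e fF by (auto simp: snd_fmul)
      then have "u (k + j') < u (k + (i - k))" using a by blast
      then show ?thesis using j' False by (simp add: add.commute)
    qed
  qed
  also have "\<dots> \<longleftrightarrow> std u k \<in> linext F \<and> std (\<lambda>i. u (k + i)) l \<in> linext G"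
    using std_linext_iff[OF F Sym_inj_on[OF u]] std_linext_iff[OF G Sym_shift_inj_on[OF u]] by simp
  finally show ?thesis .
qed

lemma fact_inverse:
  assumes p: "p \<in> Sym n"
  shows "fact p (fact (inv p) H) = H" and "fact (inv p) (fact p H) = H"
  using Sym_inverses[OF p] Sym_inv_inv[OF p]
  by (cases H; simp add: fact_def option.map_comp comp_def option.map_ident)+

lemma fact_eq_iff: "p \<in> Sym n \<Longrightarrow> fact p H = K \<longleftrightarrow> H = fact (inv p) K"
  using fact_inverse[of p n] by metis

lemma linext_fact:
  assumes p: "p \<in> Sym n" and w: "w \<in> Sym n" and fF: "fst F = n"
  shows "w \<in> linext (fact p F) \<longleftrightarrow> w \<circ> p \<in> linext F"
proof -
  have "w \<in> linext (fact p F) \<longleftrightarrow> (\<forall>j m. map_option p (snd F (inv p j)) = Some m \<longrightarrow> w m < w j)"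
    unfolding linext_def fact_def using w fF by simp
  also have "\<dots> \<longleftrightarrow> (\<forall>i m. snd F i = Some m \<longrightarrow> w (p m) < w (p i))"
  proof (intro iffI allI impI)
    fix i m assume a: "\<forall>j m. map_option p (snd F (inv p j)) = Some m \<longrightarrow> w m < w j"
      and e: "snd F i = Some m"
    have "map_option p (snd F (inv p (p i))) = Some (p m)" using e Sym_inverses(2)[OF p] by simp
    then show "w (p m) < w (p i)" using a by blast
  next
    fix j m assume a: "\<forall>i m. snd F i = Some m \<longrightarrow> w (p m) < w (p i)"
      and e: "map_option p (snd F (inv p j)) = Some m"
    then obtain m' where "snd F (inv p j) = Some m'" "m = p m'" by auto
    then show "w m < w j" using a Sym_inverses(1)[OF p] by metis
  qed
  also have "\<dots> \<longleftrightarrow> w \<circ> p \<in> linext F" unfolding linext_def fF using Sym_comp[OF w p] by simp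
  finally show ?thesis .
qed

text \<open>Twisting a product of heap-ordered forests by the inverse of a shuffle keeps it
  heap-ordered: the shuffle preserves the order inside each factor.\<close>

lemma fact_fmul_HO:
  assumes F: "F \<in> HO k" and G: "G \<in> HO l" and e: "e \<in> Sh k l"
  shows "fact (inv e) (fmul F G) \<in> HO (k + l)"
proof (rule HO_I)
  have eS: "e \<in> Sym (k + l)" by (rule Sh_D(1)[OF e])
  have ie: "inv e \<in> Sym (k + l)" using eS by (rule Sym_inv)
  show "fst (fact (inv e) (fmul F G)) = k + l"
    using HO_fst[OF F] HO_fst[OF G] by (simp add: fact_def fmul_def)
  fix i j assume "snd (fact (inv e) (fmul F G)) i = Some j"
  then have "map_option (inv e) (snd (fmul F G) (e i)) = Some j"
    using Sym_inv_inv[OF eS] by (simp add: fact_def)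
  then obtain j' where j': "snd (fmul F G) (e i) = Some j'" "j = inv e j'" by blast
  have ii: "inv e (e i) = i" by (rule Sym_inverses(2)[OF eS])
  have E: "(1 \<le> j' \<and> j' < e i \<and> e i \<le> k) \<or> (k < j' \<and> j' < e i \<and> e i \<le> k + l)"
    by (rule fmul_edge[OF F G j'(1)])
  then have "inv e j' < inv e (e i)"
    using Sh_D(2)[OF e, of j' "e i"] Sh_D(3)[OF e, of j' "e i"] by auto
  moreover have "1 \<le> inv e j'" using E Sym_pos[OF ie, of j'] by auto
  moreover have "inv e (e i) \<le> k + l" using E Sym_range[OF ie, of "e i"] by auto
  ultimately show "1 \<le> j \<and> j < i \<and> i \<le> k + l" using j'(2) ii by simp
qed

lemma lookup_vact:
  assumes p: "p \<in> Sym n"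
  shows "Poly_Mapping.lookup (vact (inv p) x) H = Poly_Mapping.lookup x (fact p H)"
proof -
  have "Poly_Mapping.lookup (vact (inv p) x) H =
      (\<Sum>F\<in>Poly_Mapping.keys x. if F = fact p H then Poly_Mapping.lookup x F else 0)"
    unfolding vact_def lookup_sum lookup_single when_def
    by (intro sum.cong) (auto simp: fact_eq_iff[OF Sym_inv[OF p]] Sym_inv_inv[OF p])
  also have "\<dots> = Poly_Mapping.lookup x (fact p H)"
    by (simp add: sum.delta in_keys_iff)
  finally show ?thesis .
qed

lemma lookup_vmul:
  assumes x: "Poly_Mapping.keys x \<subseteq> HO k" and y: "Poly_Mapping.keys y \<subseteq> HO l"
  shows "Poly_Mapping.lookup (vmul x y) H = (\<Sum>F\<in>HO k. \<Sum>G\<in>HO l.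
    if fmul F G = H then Poly_Mapping.lookup x F * Poly_Mapping.lookup y G else 0)"
proof -
  let ?t = "\<lambda>F G. if fmul F G = H then Poly_Mapping.lookup x F * Poly_Mapping.lookup y G else 0"
  have "Poly_Mapping.lookup (vmul x y) H = (\<Sum>F\<in>Poly_Mapping.keys x. \<Sum>G\<in>Poly_Mapping.keys y. ?t F G)"
    unfolding vmul_def lookup_sum lookup_single when_def ..
  also have "\<dots> = (\<Sum>F\<in>Poly_Mapping.keys x. \<Sum>G\<in>HO l. ?t F G)"
    by (intro sum.cong[OF refl] sum.mono_neutral_left) (use y finite_HO in \<open>auto simp: in_keys_iff\<close>)
  also have "\<dots> = (\<Sum>F\<in>HO k. \<Sum>G\<in>HO l. ?t F G)"
    by (intro sum.mono_neutral_left finite_HO x) (simp add: in_keys_iff cong: if_cong)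
  finally show ?thesis .
qed

lemma lookup_shuffled_product:
  assumes x: "Poly_Mapping.keys x \<subseteq> HO k" and y: "Poly_Mapping.keys y \<subseteq> HO l"
    and e: "e \<in> Sym (k + l)"
  shows "Poly_Mapping.lookup (vact (inv e) (vmul x y)) H =
    (\<Sum>F\<in>HO k. \<Sum>G\<in>HO l. if H = fact (inv e) (fmul F G)
       then Poly_Mapping.lookup x F * Poly_Mapping.lookup y G else 0)"
  unfolding lookup_vact[OF e] lookup_vmul[OF x y] fact_eq_iff[OF e] eq_commute[of "fmul _ _"] ..

lemma keys_shuffled_product:
  assumes x: "Poly_Mapping.keys x \<subseteq> HO k" and y: "Poly_Mapping.keys y \<subseteq> HO l"
    and e: "e \<in> Sh k l"
  shows "Poly_Mapping.keys (vact (inv e) (vmul x y)) \<subseteq> HO (k + l)"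
proof
  fix H assume "H \<in> Poly_Mapping.keys (vact (inv e) (vmul x y))"
  then have "(\<Sum>F\<in>HO k. \<Sum>G\<in>HO l. if H = fact (inv e) (fmul F G)
       then Poly_Mapping.lookup x F * Poly_Mapping.lookup y G else 0) \<noteq> 0"
    by (simp add: in_keys_iff lookup_shuffled_product[OF x y Sh_D(1)[OF e]])
  then obtain F where F: "F \<in> HO k" and nz: "(\<Sum>G\<in>HO l. if H = fact (inv e) (fmul F G)
       then Poly_Mapping.lookup x F * Poly_Mapping.lookup y G else 0) \<noteq> 0"
    by (rule sum.not_neutral_contains_not_neutral)
  from nz obtain G where G: "G \<in> HO l" and "(if H = fact (inv e) (fmul F G)
       then Poly_Mapping.lookup x F * Poly_Mapping.lookup y G else 0) \<noteq> 0"
    by (rule sum.not_neutral_contains_not_neutral)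
  then have "H = fact (inv e) (fmul F G)" by (simp split: if_splits)
  then show "H \<in> HO (k + l)" using fact_fmul_HO[OF F G e] by simp
qed

lemma theta_coord_shuffled_product_pairs:
  assumes x: "Poly_Mapping.keys x \<subseteq> HO k" and y: "Poly_Mapping.keys y \<subseteq> HO l" and e: "e \<in> Sh k l"
  shows "theta_coord (k + l) (Poly_Mapping.lookup (vact (inv e) (vmul x y))) w =
    (\<Sum>F\<in>HO k. \<Sum>G\<in>HO l. if w \<in> linext (fact (inv e) (fmul F G))
       then Poly_Mapping.lookup x F * Poly_Mapping.lookup y G else 0)"
proof -
  let ?a = "Poly_Mapping.lookup x" and ?b = "Poly_Mapping.lookup y"
  let ?H = "\<lambda>F G. fact (inv e) (fmul F G)"
  have "theta_coord (k + l) (Poly_Mapping.lookup (vact (inv e) (vmul x y))) w =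
      (\<Sum>H\<in>HO (k + l). \<Sum>F\<in>HO k. \<Sum>G\<in>HO l. if H = ?H F G then (if w \<in> linext H then ?a F * ?b G else 0) else 0)"
    unfolding theta_coord_def lookup_shuffled_product[OF x y Sh_D(1)[OF e]]
  proof (intro sum.cong refl)
    fix H
    show "(if w \<in> linext H then \<Sum>F\<in>HO k. \<Sum>G\<in>HO l. if H = ?H F G then ?a F * ?b G else 0 else 0) =
      (\<Sum>F\<in>HO k. \<Sum>G\<in>HO l. if H = ?H F G then (if w \<in> linext H then ?a F * ?b G else 0) else 0)"
    proof (cases "w \<in> linext H")
      case True
      show ?thesis by (simp only: True if_True)
    next
      case False
      then show ?thesis by (auto intro!: sum.neutral)
    qed
  qed
  also have "\<dots> = (\<Sum>F\<in>HO k. \<Sum>G\<in>HO l. \<Sum>H\<in>HO (k + l). if H = ?H F G then (if w \<in> linext H then ?a F * ?b G else 0) else 0)"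
    by (subst sum.swap, rule sum.cong[OF refl], rule sum.swap)
  also have "\<dots> = (\<Sum>F\<in>HO k. \<Sum>G\<in>HO l. if w \<in> linext (?H F G) then ?a F * ?b G else 0)"
    using fact_fmul_HO[OF _ _ e] by (intro sum.cong refl) (simp add: sum.delta[OF finite_HO])
  finally show ?thesis .
qed

lemma theta_coord_shuffled_product:
  assumes x: "Poly_Mapping.keys x \<subseteq> HO k" and y: "Poly_Mapping.keys y \<subseteq> HO l"
    and e: "e \<in> Sh k l" and w: "w \<in> Sym (k + l)"
  defines "u \<equiv> w \<circ> inv e"
  shows "theta_coord (k + l) (Poly_Mapping.lookup (vact (inv e) (vmul x y))) w =
    theta_coord k (Poly_Mapping.lookup x) (std u k) *
    theta_coord l (Poly_Mapping.lookup y) (std (\<lambda>i. u (k + i)) l)"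
proof -
  let ?a = "Poly_Mapping.lookup x" and ?b = "Poly_Mapping.lookup y"
  have eS: "e \<in> Sym (k + l)" by (rule Sh_D(1)[OF e])
  have uS: "u \<in> Sym (k + l)" unfolding u_def by (rule Sym_comp[OF w Sym_inv[OF eS]])
  have "(if w \<in> linext (fact (inv e) (fmul F G)) then ?a F * ?b G else 0) =
      (if std u k \<in> linext F then ?a F else 0) * (if std (\<lambda>i. u (k + i)) l \<in> linext G then ?b G else 0)"
    if F: "F \<in> HO k" and G: "G \<in> HO l" for F G
  proof -
    have fst: "fst (fmul F G) = k + l" using HO_fst[OF F] HO_fst[OF G] by (simp add: fmul_def)
    have "w \<in> linext (fact (inv e) (fmul F G)) \<longleftrightarrow> std u k \<in> linext F \<and> std (\<lambda>i. u (k + i)) l \<in> linext G"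
      unfolding linext_fact[OF Sym_inv[OF eS] w fst] u_def[symmetric] linext_fmul[OF F G uS] by simp
    then show ?thesis by simp
  qed
  then have "theta_coord (k + l) (Poly_Mapping.lookup (vact (inv e) (vmul x y))) w =
      (\<Sum>F\<in>HO k. \<Sum>G\<in>HO l.
        (if std u k \<in> linext F then ?a F else 0) * (if std (\<lambda>i. u (k + i)) l \<in> linext G then ?b G else 0))"
    unfolding theta_coord_shuffled_product_pairs[OF x y e] by (intro sum.cong refl) simp
  also have "\<dots> = theta_coord k ?a (std u k) * theta_coord l ?b (std (\<lambda>i. u (k + i)) l)"
    unfolding theta_coord_def sum_product ..
  finally show ?thesis .
qed

lemma keys_sum_Tsig:
  assumes "\<And>z. z \<in> Z \<Longrightarrow> f z \<in> Sym n"
  shows "Poly_Mapping.keys (\<Sum>z\<in>Z. Tsig n (f z) :: oforest \<Rightarrow>\<^sub>0 'k::field) \<subseteq> HO n"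
  by (intro order.trans[OF keys_sum] UN_least Tsig_dual_basis(2) assms)

lemma theta_coord_sum_Tsig_shuffles:
  assumes P: "P \<in> Sym n" and e: "e \<in> Sym n" and w: "w \<in> Sym n" and Z: "Z \<subseteq> Sym n" "finite Z"
  shows "theta_coord n (Poly_Mapping.lookup (\<Sum>z\<in>Z. Tsig n (inv z \<circ> P \<circ> e) :: oforest \<Rightarrow>\<^sub>0 'k::field)) w =
    (if P \<circ> inv (w \<circ> inv e) \<in> Z then 1 else 0)"
proof -
  have zS: "inv z \<circ> P \<circ> e \<in> Sym n" if "z \<in> Z" for z
    using that Z(1) by (blast intro: Sym_comp Sym_inv P e)
  have "theta_coord n (Poly_Mapping.lookup (\<Sum>z\<in>Z. Tsig n (inv z \<circ> P \<circ> e) :: oforest \<Rightarrow>\<^sub>0 'k)) w =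
      (\<Sum>z\<in>Z. if z = P \<circ> inv (w \<circ> inv e) then 1 else 0)"
    unfolding theta_coord_sum[OF Z(2)]
  proof (rule sum.cong[OF refl])
    fix z assume z: "z \<in> Z"
    show "theta_coord n (Poly_Mapping.lookup (Tsig n (inv z \<circ> P \<circ> e) :: oforest \<Rightarrow>\<^sub>0 'k)) w =
        (if z = P \<circ> inv (w \<circ> inv e) then 1 else 0)"
      using Tsig_dual_basis(3)[OF zS[OF z] w] inv_comp_eq_iff[OF _ w e, of z P] z Z(1) by auto
  qed
  then show ?thesis by (simp add: sum.delta[OF Z(2)])
qed

lemma theta_coord_both_sides:
  assumes s: "s \<in> Sym k" and t: "t \<in> Sym l" and e: "e \<in> Sh k l" and w: "w \<in> Sym (k + l)"
  shows "theta_coord (k + l) (Poly_Mapping.lookup (vact (inv e) (vmul (Tsig k s) (Tsig l t)) :: oforest \<Rightarrow>\<^sub>0 'k::field)) w =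
    theta_coord (k + l) (Poly_Mapping.lookup (\<Sum>z\<in>Sh k l. Tsig (k + l) (inv z \<circ> ptensor k s t \<circ> e) :: oforest \<Rightarrow>\<^sub>0 'k)) w"
proof -
  have eS: "e \<in> Sym (k + l)" by (rule Sh_D(1)[OF e])
  define u where "u = w \<circ> inv e"
  have u: "u \<in> Sym (k + l)" unfolding u_def by (rule Sym_comp[OF w Sym_inv[OF eS]])
  have "theta_coord (k + l) (Poly_Mapping.lookup (vact (inv e) (vmul (Tsig k s) (Tsig l t)) :: oforest \<Rightarrow>\<^sub>0 'k)) w =
      theta_coord k (Poly_Mapping.lookup (Tsig k s :: oforest \<Rightarrow>\<^sub>0 'k)) (std u k) *
      theta_coord l (Poly_Mapping.lookup (Tsig l t :: oforest \<Rightarrow>\<^sub>0 'k)) (std (\<lambda>i. u (k + i)) l)"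
    unfolding u_def by (rule theta_coord_shuffled_product[OF Tsig_dual_basis(2)[OF s] Tsig_dual_basis(2)[OF t] e w])
  also have "\<dots> = (if std u k = s \<and> std (\<lambda>i. u (k + i)) l = t then 1 else 0)"
    unfolding Tsig_dual_basis(3)[OF s std_Sym[OF Sym_inj_on[OF u]]]
      Tsig_dual_basis(3)[OF t std_Sym[OF Sym_shift_inj_on[where k = k, OF u]]] by simp
  also have "\<dots> = (if ptensor k s t \<circ> inv u \<in> Sh k l then 1 else 0)"
    unfolding ptensor_comp_inv_Sh_iff[OF s t u] ..
  also have "\<dots> = theta_coord (k + l) (Poly_Mapping.lookup (\<Sum>z\<in>Sh k l. Tsig (k + l) (inv z \<circ> ptensor k s t \<circ> e) :: oforest \<Rightarrow>\<^sub>0 'k)) w"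
    unfolding u_def
    by (rule theta_coord_sum_Tsig_shuffles[symmetric, OF ptensor_Sym[OF s t] eS w Sh_Sym finite_Sh])
  finally show ?thesis .
qed

theorem mainTheorem10:
  fixes k l :: nat and s t e :: "nat \<Rightarrow> nat"
  assumes "s \<in> Sym k" and "t \<in> Sym l" and "e \<in> Sh k l"
  shows "vact (inv e) (vmul (Tsig k s) (Tsig l t) :: oforest \<Rightarrow>\<^sub>0 'k::field) \<in> H_ho
       \<and> vact (inv e) (vmul (Tsig k s) (Tsig l t) :: oforest \<Rightarrow>\<^sub>0 'k::field)
           = (\<Sum>z\<in>Sh k l. Tsig (k + l) (inv z \<circ> ptensor k s t \<circ> e))"
proof -
  note s = assms(1) and t = assms(2) and e = assms(3)
  define L :: "oforest \<Rightarrow>\<^sub>0 'k" where "L = vact (inv e) (vmul (Tsig k s) (Tsig l t))"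
  define R :: "oforest \<Rightarrow>\<^sub>0 'k" where "R = (\<Sum>z\<in>Sh k l. Tsig (k + l) (inv z \<circ> ptensor k s t \<circ> e))"
  have L_keys: "Poly_Mapping.keys L \<subseteq> HO (k + l)"
    unfolding L_def by (rule keys_shuffled_product[OF Tsig_dual_basis(2)[OF s] Tsig_dual_basis(2)[OF t] e])
  have R_keys: "Poly_Mapping.keys R \<subseteq> HO (k + l)"
    unfolding R_def by (intro keys_sum_Tsig Sym_comp Sym_inv ptensor_Sym s t Sh_D(1)[OF e] Sh_D(1))
  have "L = R"
  proof (rule H_ho_eqI[OF H_ho_if_keys_HO[OF L_keys] H_ho_if_keys_HO[OF R_keys]])
    fix n w assume w: "w \<in> Sym n"
    show "theta_coord n (Poly_Mapping.lookup L) w = theta_coord n (Poly_Mapping.lookup R) w"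
      using theta_coord_both_sides[OF s t e, of w] w
        theta_coord_other_degree[OF L_keys] theta_coord_other_degree[OF R_keys]
      unfolding L_def R_def by (cases "n = k + l") auto
  qed
  then show ?thesis using H_ho_if_keys_HO[OF L_keys] unfolding L_def R_def by simp
qed

end
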